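(* (i) There exists a distribution $F$ supported on $[0,\infty)$ with $F\in\mathcal{S}_{loc}$ which is not locally almost decreasing. (ii) There exists a distribution $F$ supported on $[0,\infty)$ with $F\in\mathcal{L}_{loc}\setminus\mathcal{S}_{loc}$ which is not locally almost decreasing.
   Context: For a distribution $F$ and $d>0$ write $F(x+\Delta_d):=F((x,x+d])$, and $F^{*2}$ for the convolution of $F$ with itself; $a(x)\sim b(x)$ means $a(x)/b(x)\to1$ as $x\to\infty$. For $d>0$, $F\in\mathcal{L}_{\Delta_d}$ if $F(x+\Delta_d)>0$ for all sufficiently large $x$ and for every constant $t>0$, $F(x+s+\Delta_d)\sim F(x+\Delta_d)$ as $x\to\infty$ uniformly in $|s|\le t$; $F\in\mathcal{S}_{\Delta_d}$ if $F\in\mathcal{L}_{\Delta_d}$ and $F^{*2}(x+\Delta_d)\sim 2F(x+\Delta_d)$. $\mathcal{L}_{loc}$ (resp. $\mathcal{S}_{loc}$) is the class of $F$ with $F\in\mathcal{L}_{\Delta_d}$ (resp. $F\in\mathcal{S}_{\Delta_d}$) for every $d>0$. $F$ is called locally almost decreasing if there is a constant $x_0\ge0$ such that for every $d>0$, $F(x+\Delta_d)>0$ for all $x\ge x_0$ and $\sup_{x_0\le x\le y<\infty} F(y+\Delta_d)/F(x+\Delta_d)<\infty$. *)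

theory Defs
  imports "HOL-Probability.Probability"
begin

text \<open>Distributions are probability measures on the Borel sets of the reals
 (locale real_distribution). F(x+Delta_d) = F((x,x+d]).\<close>

definition Fint :: "real measure \<Rightarrow> real \<Rightarrow> real \<Rightarrow> real" where
  "Fint F d x = measure F {x<..x+d}"

definition L_Delta :: "real measure \<Rightarrow> real \<Rightarrow> bool" where
  "L_Delta F d \<longleftrightarrow>
     (\<forall>\<^sub>F x in at_top. Fint F d x > 0) \<and>
     (\<forall>t>0. \<forall>e>0. \<forall>\<^sub>F x in at_top. \<forall>s. \<bar>s\<bar> \<le> t \<longrightarrow>
        \<bar>Fint F d (x + s) / Fint F d x - 1\<bar> \<le> e)"

definition S_Delta :: "real measure \<Rightarrow> real \<Rightarrow> bool" where
  "S_Delta F d \<longleftrightarrow> L_Delta F d \<and>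
     ((\<lambda>x. Fint (F \<star> F) d x / (2 * Fint F d x)) \<longlongrightarrow> 1) at_top"

definition L_loc :: "real measure \<Rightarrow> bool" where
  "L_loc F \<longleftrightarrow> (\<forall>d>0. L_Delta F d)"

definition S_loc :: "real measure \<Rightarrow> bool" where
  "S_loc F \<longleftrightarrow> (\<forall>d>0. S_Delta F d)"

definition loc_almost_decreasing :: "real measure \<Rightarrow> bool" where
  "loc_almost_decreasing F \<longleftrightarrow>
     (\<exists>x0\<ge>0. \<forall>d>0. (\<forall>x\<ge>x0. Fint F d x > 0) \<and>
        (\<exists>C. \<forall>x y. x0 \<le> x \<and> x \<le> y \<longrightarrow> Fint F d y / Fint F d x \<le> C))"

end

theory Submission
  imports Defs "HOL-Real_Asymp.Real_Asymp"
begin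

text \<open>Both examples have the form \<open>F = 1 - 1 / (1 + \<tau>)\<close> with \<open>\<tau> x\<close> close to \<open>x\<close>, so that
  \<open>F(x + \<Delta>\<^sub>d) = (\<tau>(x + d) - \<tau> x) / ((1 + \<tau> x) (1 + \<tau>(x + d)))\<close> is governed by the increments
  of \<open>\<tau>\<close>. In (i), \<open>\<tau>\<close> is constant on \<open>[n, n + 1 / (n + 2)]\<close> for every integer \<open>n\<close>, which
  rules out local almost decrease (its \<open>x\<^sub>0\<close> must serve all \<open>d\<close>), while still
  \<open>F(x + \<Delta>\<^sub>d) \<sim> d / x\<^sup>2\<close>. Splitting \<open>F \<star> F(x + \<Delta>\<^sub>d)\<close> according to the smaller summand, the
  part where it stays bounded contributes \<open>\<sim> 2 F(x + \<Delta>\<^sub>d)\<close> by long-tailedness, and the rest is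
  negligible because \<open>F(w + \<Delta>\<^sub>d) = O(F(x + \<Delta>\<^sub>d))\<close> for \<open>w \<in> [(x - d) / 2, x]\<close>.
  In (ii), \<open>\<tau>\<close> has a slowly varying density, which gives long-tailedness, but this density is
  tiny on \<open>[x, x + 1]\<close> for \<open>x = 4\<^sup>j - 2\<close> and equal to \<open>1\<close> near \<open>x / 2\<close> and near \<open>2 x\<close>. Hence
  \<open>F \<star> F(x + \<Delta>\<^sub>1) \<ge> F((x / 2, x / 2 + 1 / 2])\<^sup>2\<close> dwarfs \<open>F(x + \<Delta>\<^sub>1)\<close>, and
  \<open>F(2 x + 2 + \<Delta>\<^sub>1) / F(x + \<Delta>\<^sub>1)\<close> is unbounded.\<close>

section \<open>Local probabilities of a convolution\<close>

lemma Fint_nonneg: "0 \<le> Fint F d x"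
  by (simp add: Fint_def)

lemma sets_pair_real_distribution:
  assumes "real_distribution F"
  shows "sets (F \<Otimes>\<^sub>M F) = sets (borel \<Otimes>\<^sub>M (borel :: real measure))"
  using assms real_distribution.events_eq_borel by (intro sets_pair_measure_cong) auto

lemma sum_window_sets:
  assumes "real_distribution F"
  shows "{p. fst p + snd p \<in> {x<..x+d}} \<in> sets (F \<Otimes>\<^sub>M F)"
    and "{p. fst p + snd p \<in> {x<..x+d} \<and> fst p \<le> B} \<in> sets (F \<Otimes>\<^sub>M F)"
    and "{p. fst p + snd p \<in> {x<..x+d} \<and> snd p \<le> B} \<in> sets (F \<Otimes>\<^sub>M F)"
proof -
  have sp: "\<And>P. {p. P p} = {p \<in> space (borel \<Otimes>\<^sub>M (borel::real measure)). P p}"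
    by (simp add: space_pair_measure)
  show "{p. fst p + snd p \<in> {x<..x+d}} \<in> sets (F \<Otimes>\<^sub>M F)"
    "{p. fst p + snd p \<in> {x<..x+d} \<and> fst p \<le> B} \<in> sets (F \<Otimes>\<^sub>M F)"
    "{p. fst p + snd p \<in> {x<..x+d} \<and> snd p \<le> B} \<in> sets (F \<Otimes>\<^sub>M F)"
    unfolding sets_pair_real_distribution[OF assms] by (subst sp; measurable)+
qed

lemma Fint_convolution_eq_emeasure:
  assumes F: "real_distribution F"
  shows "ennreal (Fint (F \<star> F) d x) = emeasure (F \<Otimes>\<^sub>M F) {p. fst p + snd p \<in> {x<..x+d}}"
proof -
  interpret real_distribution F by fact
  interpret P: pair_prob_space F F by unfold_locales
  have "measurable (F \<Otimes>\<^sub>M F) = measurable (borel \<Otimes>\<^sub>M borel)"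
    by (intro ext measurable_cong_sets sets_pair_real_distribution[OF F] refl)
  then have meas: "(\<lambda>(u::real, v). u + v) \<in> borel_measurable (F \<Otimes>\<^sub>M F)"
    by simp
  have "Fint (F \<star> F) d x = measure (F \<Otimes>\<^sub>M F) ((\<lambda>(u, v). u + v) -` {x<..x+d} \<inter> space (F \<Otimes>\<^sub>M F))"
    unfolding Fint_def convolution_def by (subst measure_distr[OF meas]) auto
  also have "(\<lambda>(u, v). u + v) -` {x<..x+d} \<inter> space (F \<Otimes>\<^sub>M F) = {p. fst p + snd p \<in> {x<..x+d}}"
    by (auto simp: space_pair_measure)
  finally show ?thesis
    using P.emeasure_eq_measure by simp
qed

lemma emeasure_sum_window_coordinate_le:
  assumes F: "real_distribution F"
  shows "emeasure (F \<Otimes>\<^sub>M F) {p. fst p + snd p \<in> {x<..x+d} \<and> snd p \<le> B}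
           = (\<integral>\<^sup>+v. indicator {..B} v * ennreal (Fint F d (x - v)) \<partial>F)"
    and "emeasure (F \<Otimes>\<^sub>M F) {p. fst p + snd p \<in> {x<..x+d} \<and> fst p \<le> B}
           = (\<integral>\<^sup>+v. indicator {..B} v * ennreal (Fint F d (x - v)) \<partial>F)"
proof -
  interpret real_distribution F by fact
  interpret P: pair_prob_space F F by unfold_locales
  have shift: "{u. x < u + v \<and> u + v \<le> x + d} = {x - v<..x - v + d}"
    "{u. x < v + u \<and> v + u \<le> x + d} = {x - v<..x - v + d}" for v
    by auto
  show "emeasure (F \<Otimes>\<^sub>M F) {p. fst p + snd p \<in> {x<..x+d} \<and> snd p \<le> B}
          = (\<integral>\<^sup>+v. indicator {..B} v * ennreal (Fint F d (x - v)) \<partial>F)"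
    by (subst P.emeasure_pair_measure_alt2[OF sum_window_sets(3)[OF F]], rule nn_integral_cong)
       (auto simp: indicator_def Fint_def emeasure_eq_measure shift)
  show "emeasure (F \<Otimes>\<^sub>M F) {p. fst p + snd p \<in> {x<..x+d} \<and> fst p \<le> B}
          = (\<integral>\<^sup>+v. indicator {..B} v * ennreal (Fint F d (x - v)) \<partial>F)"
    by (subst emeasure_pair_measure_alt[OF sum_window_sets(2)[OF F]], rule nn_integral_cong)
       (auto simp: indicator_def Fint_def emeasure_eq_measure shift)
qed

lemma AE_nonneg_if_measure_lessThan_0:
  assumes "real_distribution F" and "measure F {..<0} = 0"
  shows "AE v in F. 0 \<le> (v::real)"
proof -
  interpret real_distribution F by fact
  have "{..<0} \<in> null_sets F"
    using assms(2) by (simp add: null_sets_def emeasure_eq_measure)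
  then show ?thesis
    by (rule AE_I') auto
qed

lemma Fint_convolution_lower_bound:
  assumes F: "real_distribution F" and neg: "measure F {..<0} = 0"
    and "2 * A \<le> x" and "0 \<le> m" and m: "\<And>v. 0 \<le> v \<Longrightarrow> v \<le> A \<Longrightarrow> m \<le> Fint F d (x - v)"
  shows "2 * (m * measure F {..A}) \<le> Fint (F \<star> F) d x"
proof -
  interpret real_distribution F by fact
  interpret P: pair_prob_space F F by unfold_locales
  define J where "J = (\<integral>\<^sup>+v. indicator {..A} v * ennreal (Fint F d (x - v)) \<partial>F)"
  have "ennreal (m * measure F {..A}) = (\<integral>\<^sup>+v. ennreal m * indicator {..A} v \<partial>F)"
    using \<open>0 \<le> m\<close> by (simp add: nn_integral_cmult_indicator emeasure_eq_measure ennreal_mult)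
  also have "\<dots> \<le> J"
    unfolding J_def using AE_nonneg_if_measure_lessThan_0[OF F neg]
    by (intro nn_integral_mono_AE, eventually_elim) (auto simp: indicator_def m intro!: ennreal_leI)
  finally have J: "ennreal (m * measure F {..A}) \<le> J" .
  have "0 \<le> m * measure F {..A}"
    using \<open>0 \<le> m\<close> by simp
  then have "ennreal (2 * (m * measure F {..A})) = ennreal (m * measure F {..A}) + ennreal (m * measure F {..A})"
    by (metis mult_2 ennreal_plus)
  also have "\<dots> \<le> J + J"
    by (intro add_mono J)
  also have "J + J = emeasure (F \<Otimes>\<^sub>M F) {p. fst p + snd p \<in> {x<..x+d} \<and> snd p \<le> A}
              + emeasure (F \<Otimes>\<^sub>M F) {p. fst p + snd p \<in> {x<..x+d} \<and> fst p \<le> A}"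
    unfolding J_def emeasure_sum_window_coordinate_le[OF F] ..
  \<comment> \<open>the two halves are disjoint because a point in both would have sum at most \<open>2 * A \<le> x\<close>\<close>
  also have "\<dots> = emeasure (F \<Otimes>\<^sub>M F) ({p. fst p + snd p \<in> {x<..x+d} \<and> snd p \<le> A}
                                      \<union> {p. fst p + snd p \<in> {x<..x+d} \<and> fst p \<le> A})"
    using \<open>2 * A \<le> x\<close> by (intro plus_emeasure sum_window_sets[OF F]) auto
  also have "\<dots> \<le> ennreal (Fint (F \<star> F) d x)"
    unfolding Fint_convolution_eq_emeasure[OF F] by (intro emeasure_mono sum_window_sets[OF F]) auto
  finally show ?thesis
    by (simp add: ennreal_le_iff Fint_def)
qed

lemma Fint_convolution_upper_bound:
  assumes F: "real_distribution F" and neg: "measure F {..<0} = 0"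
    and "0 \<le> M" and "0 \<le> M'"
    and M: "\<And>v. 0 \<le> v \<Longrightarrow> v \<le> A \<Longrightarrow> Fint F d (x - v) \<le> M"
    and M': "\<And>v. A < v \<Longrightarrow> v \<le> (x + d) / 2 \<Longrightarrow> Fint F d (x - v) \<le> M'"
  shows "Fint (F \<star> F) d x \<le> 2 * (M * measure F {..A} + M' * measure F {A<..})"
proof -
  interpret real_distribution F by fact
  interpret P: pair_prob_space F F by unfold_locales
  define B where "B = (x + d) / 2"
  define J where "J = (\<integral>\<^sup>+v. indicator {..B} v * ennreal (Fint F d (x - v)) \<partial>F)"
  have "J \<le> (\<integral>\<^sup>+v. ennreal M * indicator {..A} v + ennreal M' * indicator {A<..} v \<partial>F)"
    unfolding J_def using AE_nonneg_if_measure_lessThan_0[OF F neg]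
  proof (intro nn_integral_mono_AE, eventually_elim)
    fix v :: real assume "0 \<le> v"
    consider "v \<le> A" | "A < v" "v \<le> B" | "A < v" "B < v"
      by linarith
    then show "indicator {..B} v * ennreal (Fint F d (x - v))
                 \<le> ennreal M * indicator {..A} v + ennreal M' * indicator {A<..} v"
      using M[OF \<open>0 \<le> v\<close>] M'[of v] by cases (auto simp: indicator_def B_def intro!: ennreal_leI)
  qed
  also have "\<dots> = ennreal (M * measure F {..A} + M' * measure F {A<..})"
    using assms(3,4)
    by (subst nn_integral_add) (auto simp: emeasure_eq_measure nn_integral_cmult_indicator ennreal_mult ennreal_plus)
  finally have J: "J \<le> ennreal (M * measure F {..A} + M' * measure F {A<..})" .
  \<comment> \<open>in every pair with sum at most \<open>x + d\<close> one coordinate is at most \<open>B\<close>\<close>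
  have "ennreal (Fint (F \<star> F) d x)
          \<le> emeasure (F \<Otimes>\<^sub>M F) ({p. fst p + snd p \<in> {x<..x+d} \<and> snd p \<le> B}
                                 \<union> {p. fst p + snd p \<in> {x<..x+d} \<and> fst p \<le> B})"
    unfolding Fint_convolution_eq_emeasure[OF F]
    by (intro emeasure_mono sets.Un sum_window_sets[OF F]) (auto simp: B_def)
  also have "\<dots> \<le> emeasure (F \<Otimes>\<^sub>M F) {p. fst p + snd p \<in> {x<..x+d} \<and> snd p \<le> B}
              + emeasure (F \<Otimes>\<^sub>M F) {p. fst p + snd p \<in> {x<..x+d} \<and> fst p \<le> B}"
    by (intro emeasure_subadditive sum_window_sets[OF F])
  also have "\<dots> = J + J"
    unfolding J_def emeasure_sum_window_coordinate_le[OF F] ..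
  also have "\<dots> \<le> ennreal (M * measure F {..A} + M' * measure F {A<..})
                 + ennreal (M * measure F {..A} + M' * measure F {A<..})"
    by (intro add_mono J)
  also have "\<dots> = ennreal (2 * (M * measure F {..A} + M' * measure F {A<..}))"
    using assms(3,4) by (metis mult_2 ennreal_plus measure_nonneg add_nonneg_nonneg mult_nonneg_nonneg)
  finally show ?thesis
    using assms(3,4) by (subst (asm) ennreal_le_iff) auto
qed

lemma Fint_convolution_ge_square:
  assumes F: "real_distribution F"
  shows "(Fint F (d/2) (x/2))\<^sup>2 \<le> Fint (F \<star> F) d x"
proof -
  interpret real_distribution F by fact
  interpret P: pair_prob_space F F by unfold_locales
  define I where "I = {x/2<..x/2 + d/2}"
  have "ennreal ((Fint F (d/2) (x/2))\<^sup>2) = emeasure F I * emeasure F I"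
    by (simp add: I_def Fint_def emeasure_eq_measure power2_eq_square ennreal_mult)
  also have "\<dots> = emeasure (F \<Otimes>\<^sub>M F) (I \<times> I)"
    by (rule emeasure_pair_measure_Times[symmetric]) (auto simp: I_def)
  also have "\<dots> \<le> emeasure (F \<Otimes>\<^sub>M F) {p. fst p + snd p \<in> {x<..x+d}}"
    by (intro emeasure_mono sum_window_sets[OF F]) (auto simp: I_def)
  also have "\<dots> = ennreal (Fint (F \<star> F) d x)"
    by (rule Fint_convolution_eq_emeasure[OF F, symmetric])
  finally show ?thesis
    by (simp add: ennreal_le_iff Fint_def)
qed

section \<open>Criteria for local long-tailedness and local subexponentiality\<close>

lemma (in real_distribution) eventually_measure_greaterThan_less:
  assumes "0 < e"
  shows "\<forall>\<^sub>F A in at_top. measure M {A<..} < e"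
proof -
  have "\<forall>\<^sub>F A in at_top. 1 - e < cdf M A"
    using assms by (intro order_tendstoD(1)[OF cdf_lim_at_top_prob]) auto
  then show ?thesis
  proof eventually_elim
    case (elim A)
    then show ?case
      using prob_compl[of "{..A}"] by (simp add: cdf_def Compl_eq_Diff_UNIV[symmetric] not_le)
  qed
qed

lemma Fint_convolution_ratio_bound:
  assumes F: "real_distribution F" and neg: "measure F {..<0} = 0"
    and "0 < a" "0 \<le> \<eta>" "\<eta> \<le> 1" "0 \<le> K" "0 \<le> A" "2 * A \<le> x"
    and near: "\<And>v. 0 \<le> v \<Longrightarrow> v \<le> A \<Longrightarrow> \<bar>Fint F d (x - v) - a\<bar> \<le> \<eta> * a"
    and dom: "\<And>v. A < v \<Longrightarrow> v \<le> (x + d) / 2 \<Longrightarrow> Fint F d (x - v) \<le> K * a"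
  shows "\<bar>Fint (F \<star> F) d x / (2 * a) - 1\<bar> \<le> \<eta> + (K + 1) * measure F {A<..}"
proof -
  interpret real_distribution F by fact
  define p q where "p = measure F {..A}" and "q = measure F {A<..}"
  have "p = 1 - q" "0 \<le> q" "0 \<le> \<eta> * q" "0 \<le> K * q"
    using prob_compl[of "{..A}"] assms
    by (simp_all add: p_def q_def Compl_eq_Diff_UNIV[symmetric] not_le)
  have "2 * ((1 - \<eta>) * a * p) \<le> Fint (F \<star> F) d x"
    unfolding p_def using assms near
    by (intro Fint_convolution_lower_bound[OF F neg]) (auto simp: abs_le_iff algebra_simps)
  then have "(1 - \<eta>) * (1 - q) \<le> Fint (F \<star> F) d x / (2 * a)"
    using \<open>0 < a\<close> \<open>p = 1 - q\<close> by (simp add: field_simps)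
  moreover have "Fint (F \<star> F) d x \<le> 2 * ((1 + \<eta>) * a * p + K * a * q)"
    unfolding p_def q_def using assms near
    by (intro Fint_convolution_upper_bound[OF F neg]) (auto simp: abs_le_iff algebra_simps)
  then have "Fint (F \<star> F) d x / (2 * a) \<le> (1 + \<eta>) * (1 - q) + K * q"
    using \<open>0 < a\<close> \<open>p = 1 - q\<close> by (simp add: field_simps)
  ultimately show ?thesis
    unfolding q_def[symmetric] using \<open>0 \<le> q\<close> \<open>0 \<le> \<eta> * q\<close> \<open>0 \<le> K * q\<close>
    by (simp add: abs_le_iff algebra_simps)
qed

lemma S_Delta_if_L_Delta_dominated:
  assumes F: "real_distribution F" and neg: "measure F {..<0} = 0" and L: "L_Delta F d"
    and "0 \<le> K" and dom: "\<And>x w. X \<le> x \<Longrightarrow> (x - d) / 2 \<le> w \<Longrightarrow> w \<le> x \<Longrightarrow> Fint F d w \<le> K * Fint F d x"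
  shows "S_Delta F d"
  unfolding S_Delta_def
proof (intro conjI L tendstoI)
  fix e :: real assume "0 < e"
  define \<eta> where "\<eta> = min e 1 / 2"
  have \<eta>: "0 < \<eta>" "\<eta> \<le> 1" "2 * \<eta> \<le> e"
    using \<open>0 < e\<close> by (auto simp: \<eta>_def)
  have "\<forall>\<^sub>F A in at_top. 0 \<le> A \<and> measure F {A<..} < \<eta> / (K + 1)"
    using real_distribution.eventually_measure_greaterThan_less[OF F] \<eta> \<open>0 \<le> K\<close>
    by (intro eventually_conj eventually_ge_at_top) auto
  then obtain A where "0 \<le> A" and tail: "(K + 1) * measure F {A<..} < \<eta>"
    using \<open>0 \<le> K\<close> by (auto simp: eventually_at_top_linorder field_simps)
  have "\<forall>\<^sub>F x in at_top. 0 < Fint F d x"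
    and "\<forall>\<^sub>F x in at_top. \<forall>s. \<bar>s\<bar> \<le> A + 1 \<longrightarrow> \<bar>Fint F d (x + s) / Fint F d x - 1\<bar> \<le> \<eta>"
    using L \<eta> \<open>0 \<le> A\<close> unfolding L_Delta_def by auto
  moreover have "\<forall>\<^sub>F x in at_top. X \<le> x \<and> 2 * A \<le> x"
    by (intro eventually_conj eventually_ge_at_top)
  ultimately show "\<forall>\<^sub>F x in at_top. dist (Fint (F \<star> F) d x / (2 * Fint F d x)) 1 < e"
  proof eventually_elim
    case (elim x)
    have "\<bar>Fint F d (x - v) - Fint F d x\<bar> \<le> \<eta> * Fint F d x" if "0 \<le> v" "v \<le> A" for v
    proof -
      have "\<bar>Fint F d (x + - v) / Fint F d x - 1\<bar> \<le> \<eta>"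
        using that by (intro elim(2)[rule_format]) auto
      then show ?thesis
        using elim(1) by (simp add: abs_le_iff field_simps)
    qed
    then have "\<bar>Fint (F \<star> F) d x / (2 * Fint F d x) - 1\<bar> \<le> \<eta> + (K + 1) * measure F {A<..}"
      using elim \<eta> \<open>0 \<le> K\<close> \<open>0 \<le> A\<close>
      by (intro Fint_convolution_ratio_bound[OF F neg]) (auto intro!: dom)
    then show ?case
      using tail \<eta> by (simp add: dist_real_def)
  qed
qed

lemma L_DeltaI_sandwich:
  assumes sandwich: "\<And>t. 0 < t \<Longrightarrow> \<exists>lo hi. ((\<lambda>x. hi x / lo x) \<longlongrightarrow> 1) at_top \<and>
      (\<forall>\<^sub>F x in at_top. 0 < lo x \<and> (\<forall>s. \<bar>s\<bar> \<le> t \<longrightarrow> lo x \<le> Fint F d (x + s) \<and> Fint F d (x + s) \<le> hi x))"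
  shows "L_Delta F d"
  unfolding L_Delta_def
proof (intro conjI allI impI)
  obtain lo hi where "\<forall>\<^sub>F x in at_top. 0 < lo x \<and> (\<forall>s. \<bar>s\<bar> \<le> 1 \<longrightarrow> lo x \<le> Fint F d (x + s) \<and> Fint F d (x + s) \<le> hi x)"
    using sandwich[OF zero_less_one] by blast
  then show "\<forall>\<^sub>F x in at_top. 0 < Fint F d x"
    by eventually_elim (force dest: spec[of _ 0])
next
  fix t e :: real assume "0 < t" "0 < e"
  obtain lo hi where lim: "((\<lambda>x. hi x / lo x) \<longlongrightarrow> 1) at_top"
    and bounds: "\<forall>\<^sub>F x in at_top. 0 < lo x \<and> (\<forall>s. \<bar>s\<bar> \<le> t \<longrightarrow> lo x \<le> Fint F d (x + s) \<and> Fint F d (x + s) \<le> hi x)"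
    using sandwich[OF \<open>0 < t\<close>] by blast
  have "\<forall>\<^sub>F x in at_top. hi x / lo x < 1 + e"
    using order_tendstoD(2)[OF lim] \<open>0 < e\<close> by simp
  with bounds show "\<forall>\<^sub>F x in at_top. \<forall>s. \<bar>s\<bar> \<le> t \<longrightarrow> \<bar>Fint F d (x + s) / Fint F d x - 1\<bar> \<le> e"
  proof eventually_elim
    case (elim x)
    show ?case
    proof (intro allI impI)
      fix s assume "\<bar>s\<bar> \<le> t"
      have lo: "0 < lo x" "lo x \<le> Fint F d (x + s)" "lo x \<le> Fint F d x"
        and hi: "Fint F d (x + s) \<le> hi x" "Fint F d x \<le> hi x"
        using elim \<open>\<bar>s\<bar> \<le> t\<close> \<open>0 < t\<close> by (auto dest: spec[of _ 0])
      have "Fint F d (x + s) / Fint F d x \<le> hi x / lo x"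
        using lo hi by (intro frac_le) auto
      moreover have "lo x / hi x \<le> Fint F d (x + s) / Fint F d x"
        using lo hi by (intro frac_le) auto
      moreover have "1 - e \<le> lo x / hi x"
      proof -
        have "hi x < (1 + e) * lo x"
          using elim(2) lo by (simp add: pos_divide_less_eq)
        moreover have "e * lo x \<le> e * hi x"
          using lo hi \<open>0 < e\<close> by (intro mult_left_mono) auto
        ultimately have "(1 - e) * hi x \<le> lo x"
          by (simp add: algebra_simps)
        then show ?thesis
          using lo hi by (simp add: field_simps)
      qed
      ultimately show "\<bar>Fint F d (x + s) / Fint F d x - 1\<bar> \<le> e"
        using elim(2) by (simp add: abs_le_iff)
    qed
  qed
qed

section \<open>Distributions with tail \<open>1 / (1 + \<tau>)\<close>\<close>

definition reciprocal_tail_distr :: "(real \<Rightarrow> real) \<Rightarrow> real measure" where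
  "reciprocal_tail_distr \<tau> = interval_measure (\<lambda>x. 1 - 1 / (1 + \<tau> x))"

locale reciprocal_tail =
  fixes \<tau> :: "real \<Rightarrow> real"
  assumes mono: "mono \<tau>"
    and continuous_at_right: "\<And>a. continuous (at_right a) \<tau>"
    and nonpos_eq_0: "\<And>x. x \<le> 0 \<Longrightarrow> \<tau> x = 0"
    and filterlim_at_top: "filterlim \<tau> at_top at_top"
begin

lemma nonneg: "0 \<le> \<tau> x"
  using monoD[OF mono, of 0 x] nonpos_eq_0[of 0] nonpos_eq_0[of x] by (cases "x \<le> 0") auto

definition cdf_fun :: "real \<Rightarrow> real" where
  "cdf_fun x = 1 - 1 / (1 + \<tau> x)"

lemma cdf_fun_mono: "mono cdf_fun"
  unfolding cdf_fun_def
  by (intro monoI) (use monoD[OF mono] nonneg in \<open>auto intro!: frac_le add_pos_nonneg\<close>)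

lemma continuous_at_right_cdf_fun: "continuous (at_right a) cdf_fun"
  unfolding cdf_fun_def using continuous_at_right[of a] nonneg[of a]
  by (intro continuous_intros) (auto simp: add_nonneg_eq_0_iff)

lemma cdf_fun_at_bot: "(cdf_fun \<longlongrightarrow> 0) at_bot"
  by (rule tendsto_eventually)
     (auto simp: eventually_at_bot_linorder cdf_fun_def nonpos_eq_0 intro!: exI[of _ 0])

lemma cdf_fun_at_top: "(cdf_fun \<longlongrightarrow> 1) at_top"
proof -
  have "((\<lambda>x. 1 / (1 + \<tau> x)) \<longlongrightarrow> 0) at_top"
    by (intro tendsto_divide_0[OF tendsto_const] filterlim_at_top_imp_at_infinity
        filterlim_tendsto_add_at_top[OF tendsto_const filterlim_at_top])
  from tendsto_diff[OF tendsto_const this, of 1] show ?thesis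
    by (simp add: cdf_fun_def[abs_def])
qed

lemma reciprocal_tail_distr_eq: "reciprocal_tail_distr \<tau> = interval_measure cdf_fun"
  by (simp add: reciprocal_tail_distr_def cdf_fun_def[abs_def])

lemma real_distribution: "real_distribution (reciprocal_tail_distr \<tau>)"
  unfolding reciprocal_tail_distr_eq
  using cdf_fun_mono continuous_at_right_cdf_fun cdf_fun_at_bot cdf_fun_at_top
  by (intro real_distribution_interval_measure) (auto dest: monoD)

lemma measure_lessThan_0: "measure (reciprocal_tail_distr \<tau>) {..<0} = 0"
proof -
  interpret real_distribution "reciprocal_tail_distr \<tau>"
    by (rule real_distribution)
  have "measure (reciprocal_tail_distr \<tau>) {..<0} \<le> measure (reciprocal_tail_distr \<tau>) {..0}"
    by (intro finite_measure_mono) auto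
  also have "\<dots> = cdf_fun 0"
    unfolding reciprocal_tail_distr_eq using cdf_fun_mono continuous_at_right_cdf_fun cdf_fun_at_bot
    by (intro measure_interval_measure_Iic) (auto dest: monoD)
  finally show ?thesis
    by (simp add: cdf_fun_def nonpos_eq_0 measure_nonneg antisym)
qed

lemma Fint_eq: "0 \<le> d \<Longrightarrow> Fint (reciprocal_tail_distr \<tau>) d x = (\<tau> (x + d) - \<tau> x) / ((1 + \<tau> x) * (1 + \<tau> (x + d)))"
  unfolding reciprocal_tail_distr_eq Fint_def
  using cdf_fun_mono continuous_at_right_cdf_fun nonneg[of x] nonneg[of "x + d"]
  by (subst measure_interval_measure_Ioc) (auto dest: monoD simp: cdf_fun_def field_simps)

end

section \<open>A locally subexponential distribution with gaps\<close>

definition ramp :: "real \<Rightarrow> real \<Rightarrow> real" where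
  "ramp g r = max 0 (r - g) / (1 - g)"

lemma ramp_mono: "g < 1 \<Longrightarrow> r \<le> s \<Longrightarrow> ramp g r \<le> ramp g s"
  unfolding ramp_def by (intro divide_right_mono) auto

lemma ramp_bounds:
  assumes "0 < g" "g < 1" "0 \<le> r" "r \<le> 1"
  shows "0 \<le> ramp g r" "ramp g r \<le> r" "r - g / (1 - g) \<le> ramp g r"
proof -
  show "0 \<le> ramp g r"
    unfolding ramp_def using assms by (intro divide_nonneg_pos) auto
  show "ramp g r \<le> r"
  proof (cases "r \<le> g")
    case False
    have "r * g \<le> g"
      using assms by (simp add: mult_left_le_one_le)
    then have "r - g \<le> r * (1 - g)"
      by (simp add: algebra_simps)
    then show ?thesis
      using False assms by (simp add: ramp_def pos_divide_le_eq)
  qed (use assms in \<open>simp add: ramp_def\<close>)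
  show "r - g / (1 - g) \<le> ramp g r"
  proof (cases "r \<le> g")
    case True
    have "g \<le> g / (1 - g)"
      using assms by (simp add: field_simps)
    then show ?thesis
      using True \<open>0 \<le> ramp g r\<close> by linarith
  next
    case False
    have "0 < 1 - g"
      using assms by simp
    have "(r - g / (1 - g)) * (1 - g) = r * (1 - g) - g"
      using \<open>0 < 1 - g\<close> by (simp add: left_diff_distrib)
    also have "\<dots> \<le> r - g"
      using assms by (simp add: algebra_simps)
    finally show ?thesis
      using False \<open>0 < 1 - g\<close> by (simp add: ramp_def pos_le_divide_eq)
  qed
qed

definition tau1 :: "real \<Rightarrow> real" where
  "tau1 x = (if x \<le> 0 then 0 else of_int \<lfloor>x\<rfloor> + ramp (1 / (of_int \<lfloor>x\<rfloor> + 2)) (frac x))"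

lemma tau1_nonpos: "x \<le> 0 \<Longrightarrow> tau1 x = 0"
  by (simp add: tau1_def)

lemma tau1_bounds:
  assumes "0 < x"
  shows "of_int \<lfloor>x\<rfloor> \<le> tau1 x" "tau1 x \<le> of_int \<lfloor>x\<rfloor> + 1" "tau1 x \<le> x" "x - 1 / x \<le> tau1 x"
proof -
  define n where "n = \<lfloor>x\<rfloor>"
  have "0 \<le> n" "x < of_int n + 1"
    using assms by (simp_all add: n_def)
  define g where "g = 1 / (of_int n + 2 :: real)"
  have g: "0 < g" "g < 1" "g / (1 - g) = 1 / (of_int n + 1)"
    using \<open>0 \<le> n\<close> by (auto simp: g_def field_simps)
  have tau1: "tau1 x = of_int n + ramp g (frac x)" and x: "x = of_int n + frac x"
    using assms by (simp_all add: tau1_def n_def g_def frac_def)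
  note ramp = ramp_bounds[OF g(1,2) frac_ge_0 less_imp_le[OF frac_lt_1], of x]
  show "of_int \<lfloor>x\<rfloor> \<le> tau1 x" "tau1 x \<le> of_int \<lfloor>x\<rfloor> + 1" "tau1 x \<le> x"
    using ramp(1,2) frac_lt_1[of x] tau1 x by (simp_all add: n_def)
  have "1 / (of_int n + 1) \<le> 1 / x"
    using assms \<open>x < of_int n + 1\<close> by (intro divide_left_mono) auto
  then show "x - 1 / x \<le> tau1 x"
    using ramp(3) g(3) tau1 x by linarith
qed

lemma tau1_nonneg: "0 \<le> tau1 x"
  using tau1_bounds(1)[of x] by (cases "x \<le> 0") (auto simp: tau1_def)

lemma tau1_mono: "mono tau1"
proof (intro monoI)
  fix x y :: real assume "x \<le> y"
  show "tau1 x \<le> tau1 y"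
  proof (cases "x \<le> 0")
    case True
    then show ?thesis using tau1_nonneg[of y] by (simp add: tau1_nonpos)
  next
    case False
    show ?thesis
    proof (cases "\<lfloor>x\<rfloor> = \<lfloor>y\<rfloor>")
      case True
      have "(0::real) \<le> of_int \<lfloor>x\<rfloor>"
        using False by simp
      then have "1 / (of_int \<lfloor>x\<rfloor> + 2) < (1::real)"
        by (smt (verit) divide_less_eq_1_pos)
      moreover have "frac x \<le> frac y"
        using \<open>x \<le> y\<close> True by (simp add: frac_def)
      ultimately show ?thesis
        using False \<open>x \<le> y\<close> True by (simp add: tau1_def ramp_mono)
    next
      case False
      then have "of_int \<lfloor>x\<rfloor> + 1 \<le> (of_int \<lfloor>y\<rfloor> :: real)"
        using floor_mono[OF \<open>x \<le> y\<close>] by linarith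
      then show ?thesis
        using tau1_bounds(2)[of x] tau1_bounds(1)[of y] \<open>\<not> x \<le> 0\<close> \<open>x \<le> y\<close> by linarith
    qed
  qed
qed

lemma tau1_continuous_at_right: "continuous (at_right a) tau1"
proof (cases "a < 0")
  case True
  have "\<forall>\<^sub>F y in at_right a. tau1 y = tau1 a"
    unfolding eventually_at_right[OF True] using True by (auto simp: tau1_nonpos intro!: exI[of _ 0])
  then show ?thesis
    unfolding continuous_within by (rule tendsto_eventually)
next
  case False
  define n where "n = \<lfloor>a\<rfloor>"
  define h where "h y = of_int n + ramp (1 / (of_int n + 2)) (y - of_int n)" for y :: real
  have "0 \<le> n" "a < of_int n + 1"
    using False by (simp_all add: n_def)
  have "continuous (at_right a) h"
    unfolding h_def ramp_def using \<open>0 \<le> n\<close> by (intro continuous_intros) (auto simp: field_simps)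
  moreover have "tau1 y = h y" if "a \<le> y" "y < of_int n + 1" for y
  proof (cases "y = 0")
    case False
    have "\<lfloor>y\<rfloor> = n"
      using that by (intro floor_unique) (auto simp: n_def, linarith)
    then show ?thesis
      using that \<open>\<not> a < 0\<close> False by (simp add: tau1_def h_def frac_def)
  next
    case True
    then show ?thesis
      using that \<open>\<not> a < 0\<close> by (simp add: tau1_def h_def n_def ramp_def)
  qed
  then have "\<forall>\<^sub>F y in at_right a. h y = tau1 y" and "tau1 a = h a"
    using \<open>a < of_int n + 1\<close> by (auto simp: eventually_at_right intro!: exI[of _ "of_int n + 1"])
  ultimately show ?thesis
    unfolding continuous_within by (auto intro: Lim_transform_eventually)
qed

lemma tau1_at_top: "filterlim tau1 at_top at_top"
proof (rule filterlim_at_top_mono)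
  show "filterlim (\<lambda>x::real. x - 1 / x) at_top at_top"
    by real_asymp
  show "\<forall>\<^sub>F x in at_top. x - 1 / x \<le> tau1 x"
    using eventually_gt_at_top[of 0] by eventually_elim (rule tau1_bounds(4))
qed

interpretation tau1: reciprocal_tail tau1
  using tau1_mono tau1_continuous_at_right tau1_nonpos tau1_at_top by unfold_locales

abbreviation F1 :: "real measure" where
  "F1 \<equiv> reciprocal_tail_distr tau1"

lemma Fint_F1_bounds:
  assumes "1 \<le> y" "0 < d"
  shows "(d - 1 / y) / ((1 + y) * (1 + y + d)) \<le> Fint F1 d y"
    and "Fint F1 d y \<le> (d + 1 / y) / (y * (y + d))"
proof -
  have "0 < y" "0 < y + d"
    using assms by auto
  note b1 = tau1_bounds[OF \<open>0 < y\<close>] and b2 = tau1_bounds[OF \<open>0 < y + d\<close>]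
  have "1 / (y + d) \<le> 1 / y"
    using assms by (intro divide_left_mono) auto
  then have num: "d - 1 / y \<le> tau1 (y + d) - tau1 y" "tau1 (y + d) - tau1 y \<le> d + 1 / y"
    using b1 b2 by linarith+
  have den: "y * (y + d) \<le> (1 + tau1 y) * (1 + tau1 (y + d))"
    "(1 + tau1 y) * (1 + tau1 (y + d)) \<le> (1 + y) * (1 + y + d)"
    using b1 b2 assms by (intro mult_mono; linarith)+
  have "0 \<le> tau1 (y + d) - tau1 y" "0 < (1 + tau1 y) * (1 + tau1 (y + d))"
    using monoD[OF tau1_mono, of y "y + d"] assms tau1_nonneg[of y] tau1_nonneg[of "y + d"]
    by (auto simp: add_pos_nonneg)
  then show "(d - 1 / y) / ((1 + y) * (1 + y + d)) \<le> Fint F1 d y"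
    and "Fint F1 d y \<le> (d + 1 / y) / (y * (y + d))"
    unfolding tau1.Fint_eq[OF less_imp_le[OF \<open>0 < d\<close>]]
    using num den assms by (auto intro!: frac_le simp: divide_le_0_iff intro: order_trans[of _ 0])
qed

lemma L_Delta_F1: assumes "0 < d" shows "L_Delta F1 d"
proof (rule L_DeltaI_sandwich)
  fix t :: real assume "0 < t"
  define lo where "lo x = (d - 1 / (x - t)) / ((1 + x + t) * (1 + x + t + d))" for x
  define hi where "hi x = (d + 1 / (x - t)) / ((x - t) * (x - t + d))" for x
  have "((\<lambda>x. hi x / lo x) \<longlongrightarrow> 1) at_top"
    unfolding lo_def hi_def using \<open>0 < d\<close> \<open>0 < t\<close> by real_asymp
  moreover have "\<forall>\<^sub>F x in at_top. 0 < lo x \<and> (\<forall>s. \<bar>s\<bar> \<le> t \<longrightarrow> lo x \<le> Fint F1 d (x + s) \<and> Fint F1 d (x + s) \<le> hi x)"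
    using eventually_ge_at_top[of "t + 1 + 2 / d"]
  proof eventually_elim
    case (elim x)
    have "0 < 2 / d"
      using \<open>0 < d\<close> by simp
    then have "1 \<le> x - t" "2 / d \<le> x - t"
      using elim by linarith+
    then have "1 / (x - t) \<le> d / 2"
      using \<open>0 < d\<close> by (simp add: field_simps)
    then have "0 < d - 1 / (x - t)"
      using \<open>0 < d\<close> by linarith
    then have "0 < lo x"
      unfolding lo_def using \<open>1 \<le> x - t\<close> \<open>0 < d\<close> \<open>0 < t\<close> by simp
    moreover have "lo x \<le> Fint F1 d (x + s) \<and> Fint F1 d (x + s) \<le> hi x" if "\<bar>s\<bar> \<le> t" for s
    proof -
      have y: "x - t \<le> x + s" "x + s \<le> x + t" "1 \<le> x + s"
        using that \<open>1 \<le> x - t\<close> by (auto simp: abs_le_iff)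
      have "1 / (x + s) \<le> 1 / (x - t)"
        using y \<open>1 \<le> x - t\<close> by (intro divide_left_mono) auto
      have "lo x \<le> (d - 1 / (x + s)) / ((1 + (x + s)) * (1 + (x + s) + d))"
        unfolding lo_def using \<open>0 < d - 1 / (x - t)\<close> \<open>1 / (x + s) \<le> 1 / (x - t)\<close> y \<open>0 < d\<close>
        by (intro frac_le mult_mono) auto
      moreover have "(d + 1 / (x + s)) / ((x + s) * ((x + s) + d)) \<le> hi x"
        unfolding hi_def using \<open>1 / (x + s) \<le> 1 / (x - t)\<close> y \<open>1 \<le> x - t\<close> \<open>0 < d\<close>
        by (intro frac_le mult_mono) auto
      ultimately show ?thesis
        using Fint_F1_bounds[OF y(3) \<open>0 < d\<close>] by linarith
    qed
    ultimately show ?case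
      by blast
  qed
  ultimately show "\<exists>lo hi. ((\<lambda>x. hi x / lo x) \<longlongrightarrow> 1) at_top \<and>
      (\<forall>\<^sub>F x in at_top. 0 < lo x \<and> (\<forall>s. \<bar>s\<bar> \<le> t \<longrightarrow> lo x \<le> Fint F1 d (x + s) \<and> Fint F1 d (x + s) \<le> hi x))"
    by blast
qed

lemma Fint_F1_dominated:
  assumes "0 < d" and x: "3 * d + 2 + 2 / d \<le> x" and w: "(x - d) / 2 \<le> w" "w \<le> x"
  shows "Fint F1 d w \<le> (32 * (d + 1) / d) * Fint F1 d x"
proof -
  define a where "a = x - d"
  define b where "b = 1 + x + d"
  have "0 < 2 / d"
    using \<open>0 < d\<close> by simp
  then have "1 \<le> x" "2 / d \<le> x" "3 * d + 2 \<le> x"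
    using x \<open>0 < d\<close> by linarith+
  then have ab: "2 \<le> a" "b \<le> 2 * a" "0 < b"
    using \<open>0 < d\<close> by (simp_all add: a_def b_def algebra_simps)
  have "1 \<le> w"
    using w ab by (simp add: a_def)
  have "d / 2 \<le> d - 1 / x"
    using \<open>2 / d \<le> x\<close> \<open>1 \<le> x\<close> \<open>0 < d\<close> by (simp add: field_simps)
  have "Fint F1 d w \<le> (d + 1 / w) / (w * (w + d))"
    by (rule Fint_F1_bounds(2)[OF \<open>1 \<le> w\<close> \<open>0 < d\<close>])
  also have "\<dots> \<le> (d + 1) / ((a / 2) * (a / 2))"
    using w ab \<open>1 \<le> w\<close> \<open>0 < d\<close> by (intro frac_le mult_mono) (auto simp: a_def)
  also have "\<dots> = 16 * (d + 1) / (4 * (a * a))"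
    using ab by (simp add: field_simps)
  also have "\<dots> \<le> 16 * (d + 1) / (b * b)"
  proof -
    have "b * b \<le> (2 * a) * (2 * a)"
      using ab by (intro mult_mono) auto
    then show ?thesis
      using ab \<open>0 < d\<close> by (intro divide_left_mono) auto
  qed
  also have "\<dots> = (32 * (d + 1) / d) * ((d / 2) / (b * b))"
    using \<open>0 < d\<close> ab by (simp add: field_simps)
  also have "\<dots> \<le> (32 * (d + 1) / d) * ((d - 1 / x) / ((1 + x) * (1 + x + d)))"
    using \<open>d / 2 \<le> d - 1 / x\<close> \<open>1 \<le> x\<close> \<open>0 < d\<close>
    by (intro mult_left_mono frac_le mult_mono) (auto simp: b_def)
  also have "\<dots> \<le> (32 * (d + 1) / d) * Fint F1 d x"
    using Fint_F1_bounds(1)[OF \<open>1 \<le> x\<close> \<open>0 < d\<close>] \<open>0 < d\<close> by (intro mult_left_mono) auto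
  finally show ?thesis .
qed

lemma S_loc_F1: "S_loc F1"
  unfolding S_loc_def
proof (intro allI impI)
  fix d :: real assume "0 < d"
  show "S_Delta F1 d"
    using \<open>0 < d\<close> Fint_F1_dominated[OF \<open>0 < d\<close>]
    by (intro S_Delta_if_L_Delta_dominated[OF tau1.real_distribution tau1.measure_lessThan_0 L_Delta_F1,
          where K = "32 * (d + 1) / d" and X = "3 * d + 2 + 2 / d"])
       auto
qed

lemma Fint_F1_gap: "Fint F1 (1 / (real n + 2)) (real n) = 0"
proof -
  have "\<lfloor>real n + 1 / (real n + 2)\<rfloor> = int n"
    by (intro floor_unique) (auto simp: field_simps)
  moreover have "\<not> real n + 1 / (real n + 2) \<le> 0"
    by (simp add: add_nonneg_pos not_le)
  ultimately have "tau1 (real n + 1 / (real n + 2)) = real n"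
    by (simp add: tau1_def frac_def ramp_def)
  moreover have "tau1 (real n) = real n"
    by (simp add: tau1_def ramp_def frac_def)
  ultimately show ?thesis
    by (simp add: tau1.Fint_eq)
qed

lemma not_loc_almost_decreasing_F1: "\<not> loc_almost_decreasing F1"
proof
  assume "loc_almost_decreasing F1"
  then obtain x0 where pos: "\<And>d x. 0 < d \<Longrightarrow> x0 \<le> x \<Longrightarrow> 0 < Fint F1 d x"
    unfolding loc_almost_decreasing_def by blast
  have "x0 \<le> real (nat \<lceil>x0\<rceil>)"
    by linarith
  from pos[OF _ this, of "1 / (real (nat \<lceil>x0\<rceil>) + 2)"] show False
    by (simp add: Fint_F1_gap)
qed

section \<open>A locally long-tailed distribution that is not locally subexponential\<close>

lemma integral_Icc_bounds:
  fixes f :: "real \<Rightarrow> real"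
  assumes "f integrable_on {x..y}" "x \<le> y" "\<And>u. x \<le> u \<Longrightarrow> u \<le> y \<Longrightarrow> m \<le> f u \<and> f u \<le> M"
  shows "m * (y - x) \<le> integral {x..y} f" "integral {x..y} f \<le> M * (y - x)"
proof -
  have "integral {x..y} (\<lambda>_. m) \<le> integral {x..y} f"
    using assms by (intro integral_le) auto
  then show "m * (y - x) \<le> integral {x..y} f"
    using assms(2) by (simp add: mult.commute)
  have "integral {x..y} f \<le> integral {x..y} (\<lambda>_. M)"
    using assms by (intro integral_le) auto
  then show "integral {x..y} f \<le> M * (y - x)"
    using assms(2) by (simp add: mult.commute)
qed

lemma abs_cos_diff_le: "\<bar>cos x - cos y\<bar> \<le> \<bar>x - (y::real)\<bar>"
proof -
  have "\<bar>cos x - cos y\<bar> = 2 * \<bar>sin ((x + y) / 2)\<bar> * \<bar>sin ((y - x) / 2)\<bar>"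
    by (simp add: cos_diff_cos abs_mult)
  also have "\<dots> \<le> 2 * 1 * \<bar>(y - x) / 2\<bar>"
    by (intro mult_mono abs_sin_le_one abs_sin_x_le_abs_x) auto
  finally show ?thesis
    by simp
qed

lemma abs_ln_diff_le:
  fixes a x y :: real
  assumes "0 < a" "a \<le> x" "a \<le> y"
  shows "\<bar>ln x - ln y\<bar> \<le> \<bar>x - y\<bar> / a"
proof -
  have *: "\<bar>ln x - ln y\<bar> \<le> \<bar>x - y\<bar> / a" if "a \<le> x" "x \<le> y" for x y
  proof -
    have "ln y - ln x \<le> (y - x) / x"
      using that \<open>0 < a\<close> by (intro ln_diff_le) auto
    also have "\<dots> \<le> (y - x) / a"
      using that \<open>0 < a\<close> by (intro divide_left_mono) auto
    finally show ?thesis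
      using that \<open>0 < a\<close> by (simp add: abs_if)
  qed
  show ?thesis
    using *[of x y] *[of y x] assms by (cases "x \<le> y") (auto simp: abs_minus_commute)
qed

text \<open>The density \<open>sigma2\<close> of \<open>tau2\<close> equals \<open>1\<close> where \<open>log\<^sub>2 (x + 2) \<in> [2 k + 1, 2 k + 4 / 3]\<close>
  and is at most \<open>(x + 2)\<^sup>-\<^sup>6\<close> where \<open>log\<^sub>2 (x + 2) \<in> [2 k, 2 k + 1 / 3]\<close>, since there
  \<open>cos (pi * log\<^sub>2 (x + 2))\<close> is at most \<open>-1 / 2\<close>, respectively at least \<open>1 / 2\<close>. Yet it varies
  slowly, because \<open>rho2\<close> has Lipschitz constant \<open>O(log x / x)\<close> near \<open>x\<close>.\<close>

definition rho2 :: "real \<Rightarrow> real" where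
  "rho2 x = 12 * ln (max 0 x + 2) * max 0 (cos (pi * log 2 (max 0 x + 2)))"

definition sigma2 :: "real \<Rightarrow> real" where
  "sigma2 x = exp (- rho2 x)"

definition tau2 :: "real \<Rightarrow> real" where
  "tau2 x = integral {0..x} sigma2"

lemma rho2_nonneg: "0 \<le> rho2 x"
  unfolding rho2_def by (intro mult_nonneg_nonneg) auto

lemma sigma2_pos: "0 < sigma2 x"
  by (simp add: sigma2_def)

lemma sigma2_le_1: "sigma2 x \<le> 1"
  using rho2_nonneg[of x] by (simp add: sigma2_def)

lemma continuous_on_sigma2: "continuous_on S sigma2"
  unfolding sigma2_def rho2_def by (intro continuous_intros) (auto intro!: add_nonneg_pos)

lemma sigma2_integrable: "sigma2 integrable_on {a..b}"
  by (rule integrable_continuous_interval[OF continuous_on_sigma2])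

lemma cos_pi_log2_bounds:
  assumes "2 ^ m \<le> z" "z \<le> 2 ^ m * (5 / 4)"
  shows "even m \<Longrightarrow> 1 / 2 \<le> cos (pi * log 2 z)" "odd m \<Longrightarrow> cos (pi * log 2 z) \<le> - 1 / 2"
proof -
  have "0 < z"
    by (rule less_le_trans[OF _ assms(1)]) simp
  define \<theta> where "\<theta> = log 2 z - real m"
  have "log 2 (5 / 4) \<le> 1 / 3"
  proof -
    have "3 * log 2 (5 / 4) = log 2 ((5 / 4) ^ 3)"
      by (simp add: log_nat_power)
    also have "\<dots> \<le> log 2 2"
      by (subst log_le_cancel_iff) (auto simp: power_divide divide_le_eq)
    finally show ?thesis
      by simp
  qed
  moreover have "real m \<le> log 2 z"
    using log_le_cancel_iff[of 2 "2 ^ m" z] assms \<open>0 < z\<close> by (simp add: log_nat_power)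
  moreover have "log 2 z \<le> real m + log 2 (5 / 4)"
  proof -
    have "log 2 z \<le> log 2 (2 ^ m * (5 / 4))"
      using assms \<open>0 < z\<close> by (subst log_le_cancel_iff) auto
    also have "\<dots> = real m + log 2 (5 / 4)"
      by (subst log_mult) (auto simp: log_nat_power)
    finally show ?thesis .
  qed
  ultimately have "0 \<le> \<theta>" "\<theta> \<le> 1 / 3"
    by (simp_all add: \<theta>_def)
  then have "cos (pi / 3) \<le> cos (pi * \<theta>)"
    by (intro cos_monotone_0_pi_le) (auto simp: field_simps)
  moreover have "cos (pi * log 2 z) = (- 1) ^ m * cos (pi * \<theta>)"
  proof -
    have "pi * log 2 z = real m * pi + pi * \<theta>"
      by (simp add: \<theta>_def algebra_simps)
    then show ?thesis
      by (simp add: cos_add cos_npi sin_npi)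
  qed
  ultimately show "even m \<Longrightarrow> 1 / 2 \<le> cos (pi * log 2 z)" "odd m \<Longrightarrow> cos (pi * log 2 z) \<le> - 1 / 2"
    by (simp_all add: cos_60)
qed

lemma sigma2_odd_band:
  assumes "odd m" "0 \<le> u" "2 ^ m \<le> u + 2" "u + 2 \<le> 2 ^ m * (5 / 4)"
  shows "sigma2 u = 1"
  using cos_pi_log2_bounds(2)[OF assms(3,4,1)] assms(2) by (simp add: sigma2_def rho2_def)

lemma sigma2_even_band:
  assumes "even m" "0 \<le> u" "2 ^ m \<le> u + 2" "u + 2 \<le> 2 ^ m * (5 / 4)"
  shows "sigma2 u \<le> 1 / (u + 2) ^ 6"
proof -
  have "12 * ln (u + 2) * (1 / 2) \<le> 12 * ln (u + 2) * max 0 (cos (pi * log 2 (u + 2)))"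
    using cos_pi_log2_bounds(1)[OF assms(3,4,1)] assms(2) by (intro mult_left_mono) auto
  then have "sigma2 u \<le> exp (- (6 * ln (u + 2)))"
    using assms(2) by (simp add: sigma2_def rho2_def)
  also have "\<dots> = 1 / exp (ln (u + 2)) ^ 6"
    by (simp add: exp_minus exp_of_nat_mult[symmetric] field_simps)
  also have "\<dots> = 1 / (u + 2) ^ 6"
    using assms(2) by simp
  finally show ?thesis .
qed

lemma abs_rho2_diff_le:
  assumes "0 \<le> a" "a \<le> u" "u \<le> b" "a \<le> v" "v \<le> b"
  shows "\<bar>rho2 u - rho2 v\<bar> \<le> 12 * (1 + pi / ln 2 * ln (b + 2)) * (\<bar>u - v\<bar> / (a + 2))"
proof -
  define U V where "U = u + 2" and "V = v + 2"
  define cU cV where "cU = max 0 (cos (pi * log 2 U))" and "cV = max 0 (cos (pi * log 2 V))"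
  define w where "w = \<bar>u - v\<bar> / (a + 2)"
  have "0 \<le> w" "0 \<le> cU" "cU \<le> 1" "0 \<le> ln V" "ln V \<le> ln (b + 2)"
    using assms by (auto simp: w_def cU_def V_def)
  have ln_diff: "\<bar>ln U - ln V\<bar> \<le> w"
    unfolding U_def V_def w_def using abs_ln_diff_le[of "a + 2" "u + 2" "v + 2"] assms by simp
  have "\<bar>cU - cV\<bar> \<le> \<bar>cos (pi * log 2 U) - cos (pi * log 2 V)\<bar>"
    unfolding cU_def cV_def by (auto simp: max_def abs_if)
  also have "\<dots> \<le> pi / ln 2 * \<bar>ln U - ln V\<bar>"
    using abs_cos_diff_le[of "pi * log 2 U" "pi * log 2 V"]
    by (simp add: log_def abs_mult diff_divide_distrib[symmetric] right_diff_distrib[symmetric])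
  also have "\<dots> \<le> pi / ln 2 * w"
    using ln_diff by (intro mult_left_mono) auto
  finally have cos_diff: "\<bar>cU - cV\<bar> \<le> pi / ln 2 * w" .
  have "rho2 u - rho2 v = 12 * ((ln U - ln V) * cU + ln V * (cU - cV))"
    using assms by (simp add: rho2_def U_def V_def cU_def cV_def algebra_simps)
  then have "\<bar>rho2 u - rho2 v\<bar> \<le> 12 * (\<bar>ln U - ln V\<bar> * cU + ln V * \<bar>cU - cV\<bar>)"
    using \<open>0 \<le> cU\<close> \<open>0 \<le> ln V\<close> by (simp add: abs_mult abs_triangle_ineq[THEN order_trans])
  also have "\<dots> \<le> 12 * (w * 1 + ln (b + 2) * (pi / ln 2 * w))"
    using ln_diff cos_diff \<open>0 \<le> w\<close> \<open>cU \<le> 1\<close> \<open>0 \<le> cU\<close> \<open>0 \<le> ln V\<close> \<open>ln V \<le> ln (b + 2)\<close>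
    by (intro mult_left_mono add_mono mult_mono) auto
  finally show ?thesis
    by (simp add: w_def algebra_simps)
qed

lemma sigma2_ratio_le:
  assumes "0 \<le> a" "a \<le> u" "u \<le> b" "a \<le> v" "v \<le> b"
  shows "sigma2 u \<le> exp (12 * (1 + pi / ln 2 * ln (b + 2)) * ((b - a) / (a + 2))) * sigma2 v"
proof -
  have "rho2 v - rho2 u \<le> 12 * (1 + pi / ln 2 * ln (b + 2)) * (\<bar>u - v\<bar> / (a + 2))"
    using abs_rho2_diff_le[OF assms] by linarith
  also have "\<dots> \<le> 12 * (1 + pi / ln 2 * ln (b + 2)) * ((b - a) / (a + 2))"
    using assms by (intro mult_left_mono divide_right_mono) auto
  finally have "rho2 v - rho2 u \<le> 12 * (1 + pi / ln 2 * ln (b + 2)) * ((b - a) / (a + 2))" .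
  then show ?thesis
    by (simp add: sigma2_def exp_add[symmetric])
qed

lemma tau2_nonpos: "x \<le> 0 \<Longrightarrow> tau2 x = 0"
  unfolding tau2_def by (cases "x = 0") auto

lemma tau2_increment_bounds:
  assumes "0 \<le> y" "0 \<le> d" and bounds: "\<And>u. y \<le> u \<Longrightarrow> u \<le> y + d \<Longrightarrow> m \<le> sigma2 u \<and> sigma2 u \<le> M"
  shows "m * d \<le> tau2 (y + d) - tau2 y" "tau2 (y + d) - tau2 y \<le> M * d"
proof -
  have "tau2 (y + d) - tau2 y = integral {y..y + d} sigma2"
    unfolding tau2_def using Henstock_Kurzweil_Integration.integral_combine[OF assms(1) _ sigma2_integrable, of "y + d"] assms(2)
    by simp
  then show "m * d \<le> tau2 (y + d) - tau2 y" "tau2 (y + d) - tau2 y \<le> M * d"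
    using integral_Icc_bounds[OF sigma2_integrable, of y "y + d" m M] assms by simp_all
qed

lemma tau2_increment_le: "0 \<le> y \<Longrightarrow> 0 \<le> d \<Longrightarrow> 0 \<le> tau2 (y + d) - tau2 y \<and> tau2 (y + d) - tau2 y \<le> d"
  using tau2_increment_bounds[of y d 0 1] sigma2_pos sigma2_le_1 by (auto simp: less_imp_le)

lemma tau2_nonneg: "0 \<le> tau2 x"
  using tau2_increment_le[of 0 x] tau2_nonpos[of x] tau2_nonpos[of 0] by (cases "x \<le> 0") auto

lemma tau2_le: "0 \<le> x \<Longrightarrow> tau2 x \<le> x"
  using tau2_increment_le[of 0 x] tau2_nonpos[of 0] by auto

lemma tau2_mono: "mono tau2"
proof (intro monoI)
  fix x y :: real assume "x \<le> y"
  then show "tau2 x \<le> tau2 y"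
    using tau2_increment_le[of x "y - x"] tau2_nonpos[of x] tau2_nonneg[of y] by (cases "x \<le> 0") auto
qed

lemma tau2_continuous_at_right: "continuous (at_right a) tau2"
proof (cases "a < 0")
  case True
  have "\<forall>\<^sub>F y in at_right a. tau2 y = tau2 a"
    unfolding eventually_at_right[OF True] using True by (auto simp: tau2_nonpos intro!: exI[of _ 0])
  then show ?thesis
    unfolding continuous_within by (rule tendsto_eventually)
next
  case False
  have "continuous_on {0..a + 1} tau2"
    unfolding tau2_def by (rule indefinite_integral_continuous_1[OF sigma2_integrable])
  then have "continuous_on {a..a + 1} tau2"
    by (rule continuous_on_subset) (use False in auto)
  then have "continuous (at a within {a..a + 1}) tau2"
    by (simp add: continuous_on_eq_continuous_within)
  then show ?thesis
    using at_within_Icc_at_right[of a "a + 1"] by simp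
qed

lemma tau2_at_top: "filterlim tau2 at_top at_top"
  unfolding filterlim_at_top
proof
  fix Z :: real
  obtain k where "2 * Z < 4 ^ k"
    using real_arch_pow[of 4 "2 * Z"] by auto
  define y where "y = (2 * 4 ^ k - 2 :: real)"
  have "1 \<le> (4::real) ^ k"
    by simp
  have "sigma2 u = 1" if "y \<le> u" "u \<le> y + 4 ^ k / 2" for u
    using sigma2_odd_band[of "2 * k + 1" u] that \<open>1 \<le> 4 ^ k\<close> by (simp add: y_def power_mult)
  then have "1 * (4 ^ k / 2) \<le> tau2 (y + 4 ^ k / 2) - tau2 y"
    using \<open>1 \<le> 4 ^ k\<close> by (intro tau2_increment_bounds(1)[where M = 1]) (auto simp: y_def)
  then have "Z \<le> tau2 (y + 4 ^ k / 2)"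
    using tau2_nonneg[of y] \<open>2 * Z < 4 ^ k\<close> by linarith
  then have "\<forall>x\<ge>y + 4 ^ k / 2. Z \<le> tau2 x"
    using monoD[OF tau2_mono] by force
  then show "\<forall>\<^sub>F x in at_top. Z \<le> tau2 x"
    unfolding eventually_at_top_linorder by blast
qed

interpretation tau2: reciprocal_tail tau2
  using tau2_mono tau2_continuous_at_right tau2_nonpos tau2_at_top by unfold_locales

abbreviation F2 :: "real measure" where
  "F2 \<equiv> reciprocal_tail_distr tau2"

lemma abs_tau2_diff_le: "0 \<le> x \<Longrightarrow> 0 \<le> y \<Longrightarrow> \<bar>tau2 y - tau2 x\<bar> \<le> \<bar>y - x\<bar>"
  using tau2_increment_le[of x "y - x"] tau2_increment_le[of y "x - y"] by (cases "x \<le> y") auto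

lemma Fint_F2_sandwich:
  assumes "0 < d" "0 \<le> t" "t \<le> x" "t \<le> tau2 x" "\<bar>s\<bar> \<le> t"
  defines "\<delta> \<equiv> 12 * (1 + pi / ln 2 * ln (x + t + d + 2)) * ((2 * t + d) / (x - t + 2))"
  shows "d * sigma2 x * exp (- \<delta>) / ((1 + tau2 x + t) * (1 + tau2 x + t + d)) \<le> Fint F2 d (x + s)"
    and "Fint F2 d (x + s) \<le> d * sigma2 x * exp \<delta> / ((1 + tau2 x - t) * (1 + tau2 x - t))"
proof -
  define y where "y = x + s"
  have y: "x - t \<le> y" "y \<le> x + t" "0 \<le> y"
    using assms by (auto simp: y_def abs_le_iff)
  have "exp (- \<delta>) * sigma2 x \<le> sigma2 u \<and> sigma2 u \<le> exp \<delta> * sigma2 x" if "y \<le> u" "u \<le> y + d" for u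
  proof
    have "sigma2 x \<le> exp \<delta> * sigma2 u"
      unfolding \<delta>_def using sigma2_ratio_le[of "x - t" x "x + t + d" u] that y assms by simp
    then show "exp (- \<delta>) * sigma2 x \<le> sigma2 u"
      by (simp add: exp_minus field_simps)
    show "sigma2 u \<le> exp \<delta> * sigma2 x"
      unfolding \<delta>_def using sigma2_ratio_le[of "x - t" u "x + t + d" x] that y assms by simp
  qed
  then have num: "exp (- \<delta>) * sigma2 x * d \<le> tau2 (y + d) - tau2 y" "tau2 (y + d) - tau2 y \<le> exp \<delta> * sigma2 x * d"
    using tau2_increment_bounds[OF \<open>0 \<le> y\<close>, where d = d and m = "exp (- \<delta>) * sigma2 x" and M = "exp \<delta> * sigma2 x"]
      assms by auto
  have "\<bar>tau2 y - tau2 x\<bar> \<le> t" "tau2 y \<le> tau2 (y + d)" "tau2 (y + d) \<le> tau2 y + d"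
    using abs_tau2_diff_le[of x y] tau2_increment_le[OF \<open>0 \<le> y\<close>, of d] y assms by auto
  then have den: "(1 + tau2 x - t) * (1 + tau2 x - t) \<le> (1 + tau2 y) * (1 + tau2 (y + d))"
    "(1 + tau2 y) * (1 + tau2 (y + d)) \<le> (1 + tau2 x + t) * (1 + tau2 x + t + d)"
    using assms tau2_nonneg[of y] by (intro mult_mono; simp add: abs_le_iff)+
  have Fint: "Fint F2 d (x + s) = (tau2 (y + d) - tau2 y) / ((1 + tau2 y) * (1 + tau2 (y + d)))"
    using assms by (simp add: y_def tau2.Fint_eq)
  have "0 < exp (- \<delta>) * sigma2 x * d"
    using sigma2_pos[of x] assms by simp
  then show "d * sigma2 x * exp (- \<delta>) / ((1 + tau2 x + t) * (1 + tau2 x + t + d)) \<le> Fint F2 d (x + s)"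
    unfolding Fint using num den tau2_nonneg[of y] tau2_nonneg[of "y + d"]
    by (intro frac_le) (auto simp: mult_ac add_pos_nonneg)
  show "Fint F2 d (x + s) \<le> d * sigma2 x * exp \<delta> / ((1 + tau2 x - t) * (1 + tau2 x - t))"
    unfolding Fint using num den assms sigma2_pos[of x] \<open>0 < exp (- \<delta>) * sigma2 x * d\<close>
    by (intro frac_le) (auto simp: mult_ac)
qed

lemma L_Delta_F2: assumes "0 < d" shows "L_Delta F2 d"
proof (rule L_DeltaI_sandwich)
  fix t :: real assume "0 < t"
  define \<delta> where "\<delta> x = 12 * (1 + pi / ln 2 * ln (x + t + d + 2)) * ((2 * t + d) / (x - t + 2))" for x
  define lo where "lo x = d * sigma2 x * exp (- \<delta> x) / ((1 + tau2 x + t) * (1 + tau2 x + t + d))" for x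
  define hi where "hi x = d * sigma2 x * exp (\<delta> x) / ((1 + tau2 x - t) * (1 + tau2 x - t))" for x
  define g where "g T = ((1 + T + t) * (1 + T + t + d)) / ((1 + T - t) * (1 + T - t))" for T
  have tau2_ge: "\<forall>\<^sub>F x in at_top. t \<le> tau2 x"
    using tau2_at_top by (simp add: filterlim_at_top)
  have "(\<delta> \<longlongrightarrow> 0) at_top"
    unfolding \<delta>_def using \<open>0 < d\<close> \<open>0 < t\<close> by real_asymp
  moreover have "(g \<longlongrightarrow> 1) at_top"
    unfolding g_def using \<open>0 < d\<close> \<open>0 < t\<close> by real_asymp
  ultimately have "((\<lambda>x. exp (2 * \<delta> x) * g (tau2 x)) \<longlongrightarrow> exp (2 * 0) * 1) at_top"
    by (intro tendsto_intros filterlim_compose[OF _ tau2_at_top])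
  then have "((\<lambda>x. exp (2 * \<delta> x) * g (tau2 x)) \<longlongrightarrow> 1) at_top"
    by simp
  moreover from tau2_ge have "\<forall>\<^sub>F x in at_top. exp (2 * \<delta> x) * g (tau2 x) = hi x / lo x"
  proof eventually_elim
    case (elim x)
    have "0 < 1 + tau2 x - t" "0 < 1 + tau2 x + t" "0 < 1 + tau2 x + t + d"
      using elim tau2_nonneg[of x] \<open>0 < t\<close> \<open>0 < d\<close> by linarith+
    have cancel: "(a * c / D1) / (a * b / D2) = (c / b) * (D2 / D1)"
      if "a \<noteq> 0" "b \<noteq> 0" "D1 \<noteq> 0" "D2 \<noteq> 0" for a b c D1 D2 :: real
      using that by (simp add: field_simps)
    have "exp (\<delta> x) / exp (- \<delta> x) = exp (2 * \<delta> x)"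
      by (subst exp_diff[symmetric]) simp
    then show ?case
      using sigma2_pos[of x] \<open>0 < d\<close> \<open>0 < 1 + tau2 x - t\<close> \<open>0 < 1 + tau2 x + t\<close> \<open>0 < 1 + tau2 x + t + d\<close>
      unfolding lo_def hi_def g_def by (subst cancel) auto
  qed
  ultimately have "((\<lambda>x. hi x / lo x) \<longlongrightarrow> 1) at_top"
    by (rule Lim_transform_eventually)
  moreover have "\<forall>\<^sub>F x in at_top. t \<le> x \<and> t \<le> tau2 x"
    using eventually_ge_at_top[of t] tau2_ge by (rule eventually_conj)
  then have "\<forall>\<^sub>F x in at_top. 0 < lo x \<and> (\<forall>s. \<bar>s\<bar> \<le> t \<longrightarrow> lo x \<le> Fint F2 d (x + s) \<and> Fint F2 d (x + s) \<le> hi x)"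
  proof eventually_elim
    case (elim x)
    have "0 < lo x"
      unfolding lo_def using sigma2_pos[of x] tau2_nonneg[of x] \<open>0 < d\<close> \<open>0 < t\<close>
      by (simp add: add_pos_nonneg)
    then show ?case
      using Fint_F2_sandwich[OF \<open>0 < d\<close> less_imp_le[OF \<open>0 < t\<close>]] elim
      unfolding lo_def hi_def \<delta>_def by blast
  qed
  ultimately show "\<exists>lo hi. ((\<lambda>x. hi x / lo x) \<longlongrightarrow> 1) at_top \<and>
      (\<forall>\<^sub>F x in at_top. 0 < lo x \<and> (\<forall>s. \<bar>s\<bar> \<le> t \<longrightarrow> lo x \<le> Fint F2 d (x + s) \<and> Fint F2 d (x + s) \<le> hi x))"
    by blast
qed

lemma Fint_F2_ge_if_sigma2_eq_1:
  assumes "0 \<le> y" "0 \<le> d" "\<And>u. y \<le> u \<Longrightarrow> u \<le> y + d \<Longrightarrow> sigma2 u = 1"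
  shows "d / (1 + y + d)\<^sup>2 \<le> Fint F2 d y"
proof -
  have "1 * d \<le> tau2 (y + d) - tau2 y"
    using assms by (intro tau2_increment_bounds(1)[where M = 1]) auto
  moreover have "(1 + tau2 y) * (1 + tau2 (y + d)) \<le> (1 + y + d) * (1 + y + d)"
    using tau2_le[of y] tau2_le[of "y + d"] tau2_nonneg[of y] tau2_nonneg[of "y + d"] assms
    by (intro mult_mono) auto
  moreover have "0 < (1 + tau2 y) * (1 + tau2 (y + d))"
    using tau2_nonneg[of y] tau2_nonneg[of "y + d"] by (simp add: add_pos_nonneg)
  ultimately show ?thesis
    using assms by (simp add: tau2.Fint_eq power2_eq_square frac_le)
qed

lemma Fint_F2_le_if_sigma2_le:
  assumes "0 \<le> y" "0 \<le> d" "\<And>u. y \<le> u \<Longrightarrow> u \<le> y + d \<Longrightarrow> sigma2 u \<le> M"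
  shows "Fint F2 d y \<le> M * d"
proof -
  have num: "0 \<le> tau2 (y + d) - tau2 y" "tau2 (y + d) - tau2 y \<le> M * d"
    using assms tau2_increment_le[of y d] by (auto intro: tau2_increment_bounds(2)[where m = 0] less_imp_le[OF sigma2_pos])
  have "1 \<le> (1 + tau2 y) * (1 + tau2 (y + d))"
    using tau2_nonneg[of y] tau2_nonneg[of "y + d"] by (simp add: algebra_simps add_nonneg_nonneg)
  then have "Fint F2 d y \<le> tau2 (y + d) - tau2 y"
    using assms num by (simp add: tau2.Fint_eq divide_le_eq mult_le_cancel_left1 mult_left_mono)
  then show ?thesis
    using num by linarith
qed

lemma Fint_F2_dip:
  assumes "1 \<le> j"
  shows "Fint F2 1 (4 ^ j - 2) \<le> 1 / (4 ^ j) ^ 6"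
proof -
  define P where "P = (4::real) ^ j"
  have "4 \<le> P"
    using power_increasing[OF assms, of "4::real"] by (simp add: P_def)
  have "sigma2 u \<le> 1 / P ^ 6" if "P - 2 \<le> u" "u \<le> P - 2 + 1" for u
  proof -
    have "sigma2 u \<le> 1 / (u + 2) ^ 6"
      using sigma2_even_band[of "2 * j" u] that \<open>4 \<le> P\<close> by (simp add: P_def power_mult)
    also have "\<dots> \<le> 1 / P ^ 6"
      using that \<open>4 \<le> P\<close> by (intro divide_left_mono power_mono) auto
    finally show ?thesis .
  qed
  then show ?thesis
    using Fint_F2_le_if_sigma2_le[of "P - 2" 1 "1 / P ^ 6"] \<open>4 \<le> P\<close> by (simp add: P_def)
qed

lemma Fint_F2_before_dip:
  assumes "2 \<le> j"
  shows "1 / (2 * (4 ^ j)\<^sup>2) \<le> Fint F2 (1 / 2) ((4 ^ j - 2) / 2)"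
proof -
  define P where "P = (4::real) ^ j"
  have "16 \<le> P"
    using power_increasing[OF assms, of "4::real"] by (simp add: P_def)
  obtain i where "j = Suc i"
    using assms by (cases j) auto
  have "(2::real) ^ (2 * i + 1) = P / 2"
    by (simp add: P_def \<open>j = Suc i\<close> power_mult)
  have "sigma2 u = 1" if "(P - 2) / 2 \<le> u" "u \<le> (P - 2) / 2 + 1 / 2" for u
  proof (rule sigma2_odd_band)
    show "odd (2 * i + 1)"
      by simp
    show "0 \<le> u" "2 ^ (2 * i + 1) \<le> u + 2" "u + 2 \<le> 2 ^ (2 * i + 1) * (5 / 4)"
      using that \<open>16 \<le> P\<close> unfolding \<open>2 ^ (2 * i + 1) = P / 2\<close> by (auto simp: field_simps)
  qed
  then have "(1 / 2) / (1 + (P - 2) / 2 + 1 / 2)\<^sup>2 \<le> Fint F2 (1 / 2) ((P - 2) / 2)"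
    using \<open>16 \<le> P\<close> by (intro Fint_F2_ge_if_sigma2_eq_1) auto
  moreover have "1 / (2 * P\<^sup>2) \<le> (1 / 2) / (1 + (P - 2) / 2 + 1 / 2)\<^sup>2"
  proof -
    define B where "B = 1 + (P - 2) / 2 + 1 / 2"
    have "0 < B" "B \<le> P"
      using \<open>16 \<le> P\<close> by (simp_all add: B_def field_simps)
    have "1 / (2 * P\<^sup>2) = (1 / 2) / P\<^sup>2"
      by simp
    also have "\<dots> \<le> (1 / 2) / B\<^sup>2"
      using \<open>0 < B\<close> \<open>B \<le> P\<close> by (intro divide_left_mono power_mono) auto
    finally show ?thesis
      by (simp add: B_def)
  qed
  ultimately show ?thesis
    by (simp add: P_def)
qed

lemma Fint_F2_after_dip:
  assumes "1 \<le> j"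
  shows "1 / (4 * (4 ^ j)\<^sup>2) \<le> Fint F2 1 (2 * 4 ^ j - 2)"
proof -
  define P where "P = (4::real) ^ j"
  have "4 \<le> P"
    using power_increasing[OF assms, of "4::real"] by (simp add: P_def)
  have "sigma2 u = 1" if "2 * P - 2 \<le> u" "u \<le> 2 * P - 2 + 1" for u
    using sigma2_odd_band[of "2 * j + 1" u] that \<open>4 \<le> P\<close> by (simp add: P_def power_mult)
  then have "1 / (1 + (2 * P - 2) + 1)\<^sup>2 \<le> Fint F2 1 (2 * P - 2)"
    using \<open>4 \<le> P\<close> by (intro Fint_F2_ge_if_sigma2_eq_1) auto
  then show ?thesis
    by (simp add: P_def power2_eq_square)
qed

lemma exists_power_4_ge:
  fixes N :: real
  obtains j where "2 \<le> j" "N \<le> 4 ^ j"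
proof -
  obtain n where "N < 4 ^ n"
    using real_arch_pow[of 4 N] by auto
  moreover have "(4::real) ^ n \<le> 4 ^ max n 2"
    by (intro power_increasing) auto
  ultimately have "N \<le> 4 ^ max n 2"
    by linarith
  then show ?thesis
    using that[of "max n 2"] by simp
qed

lemma not_S_loc_F2: "\<not> S_loc F2"
proof
  assume "S_loc F2"
  then have "((\<lambda>x. Fint (F2 \<star> F2) 1 x / (2 * Fint F2 1 x)) \<longlongrightarrow> 1) at_top"
    by (simp add: S_loc_def S_Delta_def)
  from tendstoD[OF this zero_less_one] obtain N
    where N: "\<And>x. N \<le> x \<Longrightarrow> dist (Fint (F2 \<star> F2) 1 x / (2 * Fint F2 1 x)) 1 < 1"
    unfolding eventually_at_top_linorder by blast
  obtain j where "2 \<le> j" "N + 2 \<le> 4 ^ j"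
    by (rule exists_power_4_ge)
  define P where "P = (4::real) ^ j"
  have "16 \<le> P"
    using power_increasing[OF \<open>2 \<le> j\<close>, of "4::real"] by (simp add: P_def)
  \<comment> \<open>at the dip \<open>x = P - 2\<close> the convolution still sees the large mass of \<open>F2\<close> near \<open>x / 2\<close>\<close>
  have "(1 / (2 * P\<^sup>2))\<^sup>2 \<le> (Fint F2 (1 / 2) ((P - 2) / 2))\<^sup>2"
    using Fint_F2_before_dip[OF \<open>2 \<le> j\<close>] by (intro power_mono) (auto simp: P_def)
  also have "\<dots> \<le> Fint (F2 \<star> F2) 1 (P - 2)"
    using Fint_convolution_ge_square[OF tau2.real_distribution, of 1 "P - 2"] by simp
  finally have conv: "1 / (4 * P ^ 4) \<le> Fint (F2 \<star> F2) 1 (P - 2)"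
    by (simp add: power2_eq_square power4_eq_xxxx)
  have dip: "Fint F2 1 (P - 2) \<le> 1 / P ^ 6"
    using Fint_F2_dip[of j] \<open>2 \<le> j\<close> by (simp add: P_def)
  have ratio: "dist (Fint (F2 \<star> F2) 1 (P - 2) / (2 * Fint F2 1 (P - 2))) 1 < 1"
    using N[of "P - 2"] \<open>N + 2 \<le> 4 ^ j\<close> by (simp add: P_def)
  then have "0 < Fint F2 1 (P - 2)"
    using Fint_nonneg[of F2 1 "P - 2"] by (cases "Fint F2 1 (P - 2) = 0") (auto simp: less_le)
  then have "(1 / (4 * P ^ 4)) / (2 * (1 / P ^ 6)) \<le> Fint (F2 \<star> F2) 1 (P - 2) / (2 * Fint F2 1 (P - 2))"
    using conv dip \<open>16 \<le> P\<close> Fint_nonneg by (intro frac_le) auto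
  moreover have "(1 / (4 * P ^ 4)) / (2 * (1 / P ^ 6)) = P\<^sup>2 / 8"
    using \<open>16 \<le> P\<close> by (simp add: field_simps power_eq_if)
  moreover have "2 \<le> P\<^sup>2 / 8"
    using \<open>16 \<le> P\<close> power_mono[OF \<open>16 \<le> P\<close>, of 2] by simp
  ultimately show False
    using ratio by (simp add: dist_real_def)
qed

lemma not_loc_almost_decreasing_F2: "\<not> loc_almost_decreasing F2"
proof
  assume "loc_almost_decreasing F2"
  then obtain x0 C where pos: "\<And>x. x0 \<le> x \<Longrightarrow> 0 < Fint F2 1 x"
    and bounded: "\<And>x y. x0 \<le> x \<Longrightarrow> x \<le> y \<Longrightarrow> Fint F2 1 y / Fint F2 1 x \<le> C"
    unfolding loc_almost_decreasing_def by (metis zero_less_one)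
  obtain j where "2 \<le> j" "max x0 C + 2 \<le> 4 ^ j"
    by (rule exists_power_4_ge)
  define P where "P = (4::real) ^ j"
  have "16 \<le> P"
    using power_increasing[OF \<open>2 \<le> j\<close>, of "4::real"] by (simp add: P_def)
  have "x0 \<le> P - 2" "C < P"
    using \<open>max x0 C + 2 \<le> 4 ^ j\<close> by (auto simp: P_def)
  have "(1 / (4 * P\<^sup>2)) / (1 / P ^ 6) \<le> Fint F2 1 (2 * P - 2) / Fint F2 1 (P - 2)"
    using Fint_F2_after_dip[of j] Fint_F2_dip[of j] pos[OF \<open>x0 \<le> P - 2\<close>] \<open>2 \<le> j\<close> \<open>16 \<le> P\<close>
      Fint_nonneg
    by (intro frac_le) (auto simp: P_def)
  also have "\<dots> \<le> C"
    using bounded \<open>x0 \<le> P - 2\<close> \<open>16 \<le> P\<close> by simp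
  finally have "P ^ 4 / 4 \<le> C"
    using \<open>16 \<le> P\<close> by (simp add: field_simps power_eq_if)
  moreover have "P \<le> P ^ 4 / 4"
  proof -
    have "4 \<le> P ^ 3"
      using power_mono[OF \<open>16 \<le> P\<close>, of 3] by simp
    then have "P * 4 \<le> P * P ^ 3"
      using \<open>16 \<le> P\<close> by (intro mult_left_mono) auto
    then show ?thesis
      by (simp add: eval_nat_numeral)
  qed
  ultimately show False
    using \<open>C < P\<close> by linarith
qed

theorem corollary1p1:
  shows "(\<exists>F. real_distribution F \<and> measure F {..<0} = 0 \<and>
            S_loc F \<and> \<not> loc_almost_decreasing F) \<and>
         (\<exists>F. real_distribution F \<and> measure F {..<0} = 0 \<and>
            L_loc F \<and> \<not> S_loc F \<and> \<not> loc_almost_decreasing F)"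
proof -
  have "real_distribution F1 \<and> measure F1 {..<0} = 0 \<and> S_loc F1 \<and> \<not> loc_almost_decreasing F1"
    using tau1.real_distribution tau1.measure_lessThan_0 S_loc_F1 not_loc_almost_decreasing_F1 by blast
  moreover have "real_distribution F2 \<and> measure F2 {..<0} = 0 \<and>
      L_loc F2 \<and> \<not> S_loc F2 \<and> \<not> loc_almost_decreasing F2"
    using tau2.real_distribution tau2.measure_lessThan_0 L_Delta_F2 not_S_loc_F2 not_loc_almost_decreasing_F2
    unfolding L_loc_def by blast
  ultimately show ?thesis
    by blast
qed

end
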